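(* Let $\pi : (\mathbb Z_2^2)^* \to \mathbb Z_3$ be a bijection and let $g,h \in (\mathbb Z_2^2)^*$ with $g\neq h$. Suppose $q\equiv 1\pmod 6$ is a prime power and $\rho$ is a primitive element of $\mathbb F_q$. Then $c^3_q\big(\pi(h-g)-\pi(g),\ \pi(h)-\pi(g)\big) = c^3_q(1,2)$.
   Context: $(\mathbb Z_2^2)^*=\mathbb Z_2^2\setminus\{0\}$. Write $q=6r+1$; for $i\in\mathbb Z_3$, $C^3_q(i)=\{\rho^{3j+i}: 0\le j\le 2r-1\}$, and for $a,b\in\mathbb Z_3$, $c^3_q(a,b)=|(C^3_q(a)+1)\cap C^3_q(b)|$. *)

theory Defs
  imports Main "HOL-Library.Numeral_Type" "HOL-Library.Product_Plus"
begin

text \<open>Z_2^2 is modelled as the type 2 \<times> 2 (componentwise arithmetic mod 2),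
  Z_3 as the type 3 (arithmetic mod 3); F_q as a finite field type 'a with q = CARD('a).\<close>

definition primitive_element :: "'a::{finite,field} \<Rightarrow> bool" where
  "primitive_element \<rho> \<longleftrightarrow> \<rho> \<noteq> 0 \<and> (\<forall>x. x \<noteq> 0 \<longrightarrow> (\<exists>k::nat. x = \<rho> ^ k))"

definition cyc_class :: "'a::{finite,field} \<Rightarrow> 3 \<Rightarrow> 'a set" where
  "cyc_class \<rho> i = (let r = (CARD('a) - 1) div 6 in
     {\<rho> ^ (3 * j + nat (Rep_bit1 i)) | j. j \<le> 2 * r - 1})"

definition cyc_num :: "'a::{finite,field} \<Rightarrow> 3 \<Rightarrow> 3 \<Rightarrow> nat" where
  "cyc_num \<rho> a b = card (((\<lambda>x. x + 1) ` cyc_class \<rho> a) \<inter> cyc_class \<rho> b)"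

end

theory Submission
  imports Defs
begin

text \<open>Inversion \<open>x \<mapsto> 1/x\<close> maps \<open>C(a)\<close> onto \<open>C(-a)\<close>, and if \<open>x + 1 \<in> C(b)\<close> then
  \<open>1/x + 1 = (x + 1)/x \<in> C(b - a)\<close>.
  Hence \<open>c(a, b) = c(-a, b - a)\<close>, and in particular \<open>c(2, 1) = c(1, 2)\<close>.
  The three elements \<open>g\<close>, \<open>h\<close>, \<open>h - g\<close> of \<open>(\<int>\<^sub>2\<^sup>2)\<^sup>*\<close> are distinct, so their images under
  \<open>\<pi>\<close> are distinct and the two arguments on the left are the two distinct non-zero
  elements of \<open>\<int>\<^sub>3\<close>, i.e. \<open>(1, 2)\<close> or \<open>(2, 1)\<close>.\<close>

lemma card_field_ge_2: "2 \<le> CARD('a::{finite,field})"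
proof -
  have "card {0, 1::'a} \<le> CARD('a)" by (rule card_mono) auto
  then show ?thesis by simp
qed

lemma finite_field_power_card_minus_one:
  fixes x :: "'a::{finite,field}"
  assumes "x \<noteq> 0"
  shows "x ^ (CARD('a) - 1) = 1"
proof -
  have "(\<Prod>y\<in>UNIV-{0}. x * y) = (\<Prod>y\<in>UNIV-{0}. y)"
    by (rule prod.reindex_bij_witness[of _ "\<lambda>y. y / x" "\<lambda>y. x * y"]) (use assms in auto)
  moreover have "(\<Prod>y\<in>UNIV-{0}. x * y) = x ^ (CARD('a) - 1) * (\<Prod>y\<in>UNIV-{0}. y)"
    by (simp add: prod.distrib card_Diff_singleton)
  ultimately show ?thesis by simp
qed

lemma finite_field_power_mod_card_minus_one:
  fixes x :: "'a::{finite,field}"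
  assumes "x \<noteq> 0"
  shows "x ^ (k mod (CARD('a) - 1)) = x ^ k"
proof -
  have "x ^ k = x ^ ((CARD('a) - 1) * (k div (CARD('a) - 1)) + k mod (CARD('a) - 1))"
    by (simp only: mult_div_mod_eq)
  also have "\<dots> = (x ^ (CARD('a) - 1)) ^ (k div (CARD('a) - 1)) * x ^ (k mod (CARD('a) - 1))"
    by (simp only: power_add power_mult)
  finally show ?thesis using finite_field_power_card_minus_one[OF assms] by simp
qed

lemma finite_field_inverse_eq_power:
  fixes x :: "'a::{finite,field}"
  assumes "x \<noteq> 0"
  shows "inverse x = x ^ (CARD('a) - 2)"
proof (rule inverse_unique)
  have "CARD('a) - 1 = Suc (CARD('a) - 2)" using card_field_ge_2[where 'a='a] by simp
  then show "x * x ^ (CARD('a) - 2) = 1"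
    using finite_field_power_card_minus_one[OF assms] by simp
qed

lemma of_nat_bit1_eq_iff:
  "(of_nat m :: 'a::finite bit1) = i \<longleftrightarrow> m mod CARD('a bit1) = nat (Rep_bit1 i)"
proof -
  have "(of_nat m :: 'a bit1) = i \<longleftrightarrow> int (m mod CARD('a bit1)) = Rep_bit1 i"
    by (metis bit1.Rep_Abs_mod bit1.Rep_inject_sym bit1.of_nat_eq zmod_int)
  also have "\<dots> \<longleftrightarrow> m mod CARD('a bit1) = nat (Rep_bit1 i)"
    using bit1.Rep_mod[of i] pos_mod_sign[of "int CARD('a bit1)" "Rep_bit1 i"]
    by (simp only: int_eq_iff) simp
  finally show ?thesis .
qed

lemma cyc_class_eq_powers:
  fixes \<rho> :: "'a::{finite,field}"
  assumes card: "CARD('a) mod 6 = 1" and "\<rho> \<noteq> 0"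
  shows "cyc_class \<rho> i = {\<rho> ^ k | k. of_nat k = i}"
proof -
  define r where "r = (CARD('a) - 1) div 6"
  have r: "CARD('a) - 1 = 6 * r" "1 \<le> r"
    using card card_field_ge_2[where 'a='a] unfolding r_def by presburger+
  have rep_i: "nat (Rep_bit1 i) < 3" using bit1.Rep_less_n[of i] by simp
  show ?thesis unfolding cyc_class_def Let_def r_def[symmetric]
  proof (intro set_eqI iffI)
    fix x assume "x \<in> {\<rho> ^ (3 * j + nat (Rep_bit1 i)) | j. j \<le> 2 * r - 1}"
    then obtain j where "x = \<rho> ^ (3 * j + nat (Rep_bit1 i))" by blast
    moreover have "of_nat (3 * j + nat (Rep_bit1 i)) = i"
      using rep_i by (subst of_nat_bit1_eq_iff) simp
    ultimately show "x \<in> {\<rho> ^ k | k. of_nat k = i}" by blast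
  next
    fix x assume "x \<in> {\<rho> ^ k | k. of_nat k = i}"
    then obtain k where x: "x = \<rho> ^ k" and "of_nat k = i" by blast
    then have k: "k mod 3 = nat (Rep_bit1 i)" using of_nat_bit1_eq_iff[of k i] by simp
    define k' where "k' = k mod (6 * r)"
    have "k' mod 3 = nat (Rep_bit1 i)"
      using k unfolding k'_def by (simp add: mod_mod_cancel)
    then have k': "3 * (k' div 3) + nat (Rep_bit1 i) = k'"
      using div_mult_mod_eq[of k' 3] by linarith
    have "x = \<rho> ^ k'"
      using finite_field_power_mod_card_minus_one[OF assms(2), of k] unfolding x k'_def r(1) by simp
    then have "x = \<rho> ^ (3 * (k' div 3) + nat (Rep_bit1 i))" by (simp only: k')
    moreover have "k' < 3 * (2 * r)" using r(2) by (simp add: k'_def)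
    then have "k' div 3 \<le> 2 * r - 1" by (simp add: div_less_iff_less_mult)
    ultimately show "x \<in> {\<rho> ^ (3 * j + nat (Rep_bit1 i)) | j. j \<le> 2 * r - 1}" by blast
  qed
qed

lemma cyc_class_nonzero:
  assumes "\<rho> \<noteq> 0" and "x \<in> cyc_class \<rho> i"
  shows "x \<noteq> 0"
  using assms unfolding cyc_class_def Let_def by auto

lemma cyc_class_mult:
  fixes \<rho> :: "'a::{finite,field}"
  assumes "CARD('a) mod 6 = 1" and "\<rho> \<noteq> 0"
    and "x \<in> cyc_class \<rho> i" and "y \<in> cyc_class \<rho> j"
  shows "x * y \<in> cyc_class \<rho> (i + j)"
proof -
  obtain k l where "x = \<rho> ^ k" "of_nat k = i" "y = \<rho> ^ l" "of_nat l = j"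
    using assms(3,4) unfolding cyc_class_eq_powers[OF assms(1,2)] by blast
  then have "x * y = \<rho> ^ (k + l) \<and> of_nat (k + l) = i + j" by (simp add: power_add)
  then show ?thesis unfolding cyc_class_eq_powers[OF assms(1,2)] by blast
qed

lemma cyc_class_inverse:
  fixes \<rho> :: "'a::{finite,field}"
  assumes card: "CARD('a) mod 6 = 1" and "\<rho> \<noteq> 0" and "x \<in> cyc_class \<rho> i"
  shows "inverse x \<in> cyc_class \<rho> (- i)"
proof -
  obtain k where x: "x = \<rho> ^ k" and k: "of_nat k = i"
    using assms(3) unfolding cyc_class_eq_powers[OF assms(1,2)] by blast
  have "of_nat (CARD('a) - 2) + 1 = (of_nat (CARD('a) - 1) :: 3)"
    using card_field_ge_2[where 'a='a] by (simp add: Suc_diff_Suc numeral_2_eq_2)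
  also have "\<dots> = 0"
    using card by (subst of_nat_bit1_eq_iff) (simp add: bit1.Rep_0, presburger)
  finally have "of_nat (CARD('a) - 2) = (- 1 :: 3)" by (simp add: eq_neg_iff_add_eq_0)
  then have "of_nat (k * (CARD('a) - 2)) = - i" using k by simp
  moreover have "inverse x = \<rho> ^ (k * (CARD('a) - 2))"
    using assms(2) unfolding x by (simp add: finite_field_inverse_eq_power power_mult)
  ultimately show ?thesis unfolding cyc_class_eq_powers[OF assms(1,2)] by blast
qed

lemma cyc_num_eq_card: "cyc_num \<rho> a b = card {x \<in> cyc_class \<rho> a. x + 1 \<in> cyc_class \<rho> b}"
proof -
  have "(\<lambda>x. x + 1) ` cyc_class \<rho> a \<inter> cyc_class \<rho> b
        = (\<lambda>x. x + 1) ` {x \<in> cyc_class \<rho> a. x + 1 \<in> cyc_class \<rho> b}"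
    by auto
  then show ?thesis unfolding cyc_num_def by (simp add: card_image)
qed

lemma cyc_num_eq_neg_diff:
  fixes \<rho> :: "'a::{finite,field}"
  assumes "CARD('a) mod 6 = 1" and "\<rho> \<noteq> 0"
  shows "cyc_num \<rho> a b = cyc_num \<rho> (- a) (b - a)"
proof -
  define S where "S a b = {x \<in> cyc_class \<rho> a. x + 1 \<in> cyc_class \<rho> b}" for a b
  have inverse_S: "inverse x \<in> S (- a) (b - a)" if "x \<in> S a b" for x a b
  proof -
    from that have x: "x \<in> cyc_class \<rho> a" "x + 1 \<in> cyc_class \<rho> b" by (auto simp: S_def)
    have "inverse x + 1 = (x + 1) * inverse x"
      using cyc_class_nonzero[OF assms(2) x(1)] by (simp add: field_simps)
    then have "inverse x + 1 \<in> cyc_class \<rho> (b + - a)"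
      using cyc_class_mult[OF assms x(2) cyc_class_inverse[OF assms x(1)]] by simp
    then show ?thesis using cyc_class_inverse[OF assms x(1)] by (simp add: S_def)
  qed
  have "inverse ` S a b = S (- a) (b - a)"
  proof
    show "inverse ` S a b \<subseteq> S (- a) (b - a)" using inverse_S by blast
    show "S (- a) (b - a) \<subseteq> inverse ` S a b"
    proof
      fix y assume "y \<in> S (- a) (b - a)"
      then have "inverse y \<in> S a b" using inverse_S[of y "- a" "b - a"] by simp
      then show "y \<in> inverse ` S a b" by (metis image_eqI inverse_inverse_eq)
    qed
  qed
  moreover have "inj (inverse :: 'a \<Rightarrow> 'a)" by (rule injI) simp
  ultimately show ?thesis
    unfolding cyc_num_eq_card S_def[symmetric] by (metis card_image inj_on_subset subset_UNIV)
qed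

lemma cyc_num_2_1:
  fixes \<rho> :: "'a::{finite,field}"
  assumes "\<rho> \<noteq> 0" and "CARD('a) mod 6 = 1"
  shows "cyc_num \<rho> 2 1 = cyc_num \<rho> 1 2"
proof -
  have "cyc_num \<rho> 2 1 = cyc_num \<rho> (- 2) (1 - 2)" by (rule cyc_num_eq_neg_diff[OF assms(2,1)])
  moreover have "- 2 = (1::3)" "1 - 2 = (2::3)"
    by (simp_all add: minus_equation_iff eq_neg_iff_add_eq_0)
  ultimately show ?thesis by (simp only:)
qed

lemma add_self_2x2: "(g :: 2 \<times> 2) + g = 0"
proof -
  have "x + x = 0" for x :: 2
  proof (induct x)
    case (of_int z)
    then have "z = 0 \<or> z = 1" by fastforce
    then show ?case by auto
  qed
  then show ?thesis by (cases g) (simp add: zero_prod_def)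
qed

lemma nonzero_distinct_3_cases:
  fixes a b :: 3
  assumes "a \<noteq> 0" and "b \<noteq> 0" and "a \<noteq> b"
  shows "a = 1 \<and> b = 2 \<or> a = 2 \<and> b = 1"
proof -
  have "x = 0 \<or> x = 1 \<or> x = 2" for x :: 3
  proof (induct x)
    case (of_int z)
    then have "z = 0 \<or> z = 1 \<or> z = 2" by fastforce
    then show ?case by auto
  qed
  then show ?thesis using assms by metis
qed

theorem proposition3p5:
  fixes \<pi> :: "2 \<times> 2 \<Rightarrow> 3" and g h :: "2 \<times> 2" and \<rho> :: "'a::{finite,field}"
  assumes "bij_betw \<pi> (UNIV - {0}) UNIV"
    and "g \<noteq> 0" and "h \<noteq> 0" and "g \<noteq> h"
    and "CARD('a) mod 6 = 1"
    and "primitive_element \<rho>"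
  shows "cyc_num \<rho> (\<pi> (h - g) - \<pi> g) (\<pi> h - \<pi> g) = cyc_num \<rho> 1 2"
proof -
  have inj: "inj_on \<pi> (UNIV - {0})" using assms(1) by (rule bij_betw_imp_inj_on)
  have "h - g \<noteq> g" using assms(3) add_self_2x2[of g] by (metis diff_add_cancel)
  then have "\<pi> (h - g) \<noteq> \<pi> g" "\<pi> h \<noteq> \<pi> g" "\<pi> (h - g) \<noteq> \<pi> h"
    using inj assms(2-4) by (auto dest: inj_onD)
  then have "\<pi> (h - g) - \<pi> g = 1 \<and> \<pi> h - \<pi> g = 2 \<or> \<pi> (h - g) - \<pi> g = 2 \<and> \<pi> h - \<pi> g = 1"
    by (intro nonzero_distinct_3_cases) auto
  moreover have "\<rho> \<noteq> 0" using assms(6) by (simp add: primitive_element_def)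
  then have "cyc_num \<rho> 2 1 = cyc_num \<rho> 1 2" using assms(5) by (rule cyc_num_2_1)
  ultimately show ?thesis by auto
qed

end
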